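(* Let $K$ be a field of characteristic $0$ and let $(A_i,\omega_i)$, $i=1,2$, be baric $K$-algebras of countable dimension, with $\nu_i=\dim_K A_i$. Then $A_1\bowtie A_2$ is associative if and only if $(A_i,\omega_i)\cong(K^{\bowtie\nu_i},\operatorname{id}_K^{\bowtie\nu_i})$ for $i=1,2$. In that case $(A_1\bowtie A_2,\omega_1\bowtie\omega_2)\cong(K^{\bowtie\nu},\operatorname{id}_K^{\bowtie\nu})$ with $\nu=\nu_1+\nu_2$.
   Context: A baric algebra over a field $K$ is a pair $(A,\omega)$ where $A$ is a (not necessarily associative) $K$-algebra and $\omega:A\to K$ is a nonzero $K$-algebra homomorphism; two baric algebras $(A,\omega),(B,\varphi)$ are isomorphic if there is an algebra isomorphism $f:A\to B$ with $\varphi\circ f=\omega$. For baric algebras $(A_1,\omega_1),(A_2,\omega_2)$, $A_1\bowtie A_2$ is the vector space $A_1\oplus A_2$ with product $(a_1,a_2)(b_1,b_2)=(a_1b_1+\omega_2(b_2)a_1,\ a_2b_2+\omega_1(b_1)a_2)$ and weight $\omega_1\bowtie\omega_2(a_1,a_2)=\omega_1(a_1)+\omega_2(a_2)$. For a cardinal $1\le\nu\le\aleph_0$, $K^{\bowtie\nu}$ is the $K$-vector space of finitely supported families $(\alpha_i)_{i<\nu}$ in $K$ with product $(\alpha_i)(\beta_i)=\big(\sum_i\beta_i\big)(\alpha_i)$ and weight $\operatorname{id}_K^{\bowtie\nu}((\alpha_i))=\sum_i\alpha_i$ (for finite $\nu$ this is the iterated $\bowtie$-construction of $\nu$ copies of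 $(K,\operatorname{id}_K)$). *)

theory Defs
  imports Main "HOL-Library.Extended_Nat" "HOL-Library.Countable_Set" "HOL-Library.Product_Plus"
begin

definition baric_algebra ::
  "('k::field \<Rightarrow> 'a::ab_group_add \<Rightarrow> 'a) \<Rightarrow> ('a \<Rightarrow> 'a \<Rightarrow> 'a) \<Rightarrow> ('a \<Rightarrow> 'k) \<Rightarrow> bool" where
  "baric_algebra s m w \<longleftrightarrow>
     vector_space s \<and>
     (\<forall>x. Vector_Spaces.linear s s (m x)) \<and>
     (\<forall>y. Vector_Spaces.linear s s (\<lambda>x. m x y)) \<and>
     Vector_Spaces.linear s (*) w \<and>
     (\<forall>x y. w (m x y) = w x * w y) \<and>
     w \<noteq> (\<lambda>_. 0)"

text \<open>The vector space (with scalar multiplication s) has dimension \<nu>, where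
\<nu> = \<infinity> stands for the countably infinite dimension aleph_0.\<close>
definition has_dim :: "('k::field \<Rightarrow> 'a::ab_group_add \<Rightarrow> 'a) \<Rightarrow> enat \<Rightarrow> bool" where
  "has_dim s \<nu> \<longleftrightarrow>
     (\<exists>B. \<not> module.dependent s B \<and> module.span s B = UNIV \<and>
          ((finite B \<and> \<nu> = enat (card B)) \<or> (infinite B \<and> countable B \<and> \<nu> = \<infinity>)))"

definition countable_dim :: "('k::field \<Rightarrow> 'a::ab_group_add \<Rightarrow> 'a) \<Rightarrow> bool" where
  "countable_dim s \<longleftrightarrow>
     (\<exists>B. \<not> module.dependent s B \<and> module.span s B = UNIV \<and> countable B)"

definition associative :: "('a \<Rightarrow> 'a \<Rightarrow> 'a) \<Rightarrow> bool" where
  "associative m \<longleftrightarrow> (\<forall>x y z. m (m x y) z = m x (m y z))"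

definition bowtie_scale ::
  "('k \<Rightarrow> 'a \<Rightarrow> 'a) \<Rightarrow> ('k \<Rightarrow> 'b \<Rightarrow> 'b) \<Rightarrow> 'k \<Rightarrow> 'a \<times> 'b \<Rightarrow> 'a \<times> 'b" where
  "bowtie_scale s1 s2 c p = (s1 c (fst p), s2 c (snd p))"

definition bowtie_mult ::
  "('k \<Rightarrow> 'a \<Rightarrow> 'a) \<Rightarrow> ('a \<Rightarrow> 'a \<Rightarrow> 'a) \<Rightarrow> ('a \<Rightarrow> 'k) \<Rightarrow>
   ('k \<Rightarrow> 'b \<Rightarrow> 'b) \<Rightarrow> ('b \<Rightarrow> 'b \<Rightarrow> 'b) \<Rightarrow> ('b \<Rightarrow> 'k) \<Rightarrow>
   'a \<times> 'b \<Rightarrow> 'a \<times> 'b \<Rightarrow> 'a::ab_group_add \<times> 'b::ab_group_add" where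
  "bowtie_mult s1 m1 w1 s2 m2 w2 p q =
     (m1 (fst p) (fst q) + s1 (w2 (snd q)) (fst p),
      m2 (snd p) (snd q) + s2 (w1 (fst q)) (snd p))"

definition bowtie_weight :: "('a \<Rightarrow> 'k::field) \<Rightarrow> ('b \<Rightarrow> 'k) \<Rightarrow> 'a \<times> 'b \<Rightarrow> 'k" where
  "bowtie_weight w1 w2 p = w1 (fst p) + w2 (snd p)"

text \<open>K^{\<bowtie>\<nu>}: finitely supported families indexed by i < \<nu> (\<nu> = \<infinity> means aleph_0).\<close>
definition Kb_carrier :: "enat \<Rightarrow> (nat \<Rightarrow> 'k::field) set" where
  "Kb_carrier \<nu> = {x. finite {i. x i \<noteq> 0} \<and> (\<forall>i. \<nu> \<le> enat i \<longrightarrow> x i = 0)}"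

definition Kb_weight :: "(nat \<Rightarrow> 'k::field) \<Rightarrow> 'k" where
  "Kb_weight x = (\<Sum>i\<in>{i. x i \<noteq> 0}. x i)"

definition Kb_mult :: "(nat \<Rightarrow> 'k::field) \<Rightarrow> (nat \<Rightarrow> 'k) \<Rightarrow> (nat \<Rightarrow> 'k)" where
  "Kb_mult x y = (\<lambda>i. Kb_weight y * x i)"

definition iso_Kb ::
  "('k::field \<Rightarrow> 'a::ab_group_add \<Rightarrow> 'a) \<Rightarrow> ('a \<Rightarrow> 'a \<Rightarrow> 'a) \<Rightarrow> ('a \<Rightarrow> 'k) \<Rightarrow> enat \<Rightarrow> bool" where
  "iso_Kb s m w \<nu> \<longleftrightarrow>
     (\<exists>f :: 'a \<Rightarrow> nat \<Rightarrow> 'k.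
        bij_betw f UNIV (Kb_carrier \<nu>) \<and>
        (\<forall>x y. f (x + y) = (\<lambda>i. f x i + f y i)) \<and>
        (\<forall>c x. f (s c x) = (\<lambda>i. c * f x i)) \<and>
        (\<forall>x y. f (m x y) = Kb_mult (f x) (f y)) \<and>
        (\<forall>x. Kb_weight (f x) = w x))"

end

theory Submission
  imports Defs "HOL-Analysis.Product_Vector"
begin

(* Call a baric algebra (A, w) with scalar multiplication s "weight-multiplicative" if its
   product is x y = w(y) x; this is exactly the product of K^{bowtie nu}.  The proof has
   three parts.

   1. A1 bowtie A2 is associative iff both factors are weight-multiplicative: comparing
      ((x,0)(0,u))(y,0) with (x,0)((0,u)(y,0)) for w2(u) = 1 forces m1 x y = w1(y) x, and
      symmetrically for A2; conversely the bowtie product of weight-multiplicative algebras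
      is again weight-multiplicative, hence associative.  Moreover A1 bowtie A2 is a baric
      algebra of dimension nu1 + nu2 (basis B1 x {0} union {0} x B2).
   2. A baric algebra of dimension nu is isomorphic to K^{bowtie nu} iff it is
      weight-multiplicative.  One direction is immediate.  For the other, the coordinates
      with respect to an enumerated basis (e i) identify A linearly with the finitely
      supported families indexed by i < nu, turning w into g |-> sum_i w(e i) g i.  A
      "pivot map", which rewrites a single coordinate k with w(e k) <> 0, is a linear
      automorphism transforming this form into the standard weight g |-> sum_i g i.
   3. The theorem combines 1 and 2 for A1, A2 and A1 bowtie A2. *)

lemma baric_algebraD:
  assumes "baric_algebra s m w"
  shows "vector_space s" "Vector_Spaces.linear s (*) w" "w \<noteq> (\<lambda>_. 0)"
    and "w (m x y) = w x * w y"
  using assms unfolding baric_algebra_def by auto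

lemma baric_algebra_identities:
  assumes "baric_algebra s m w"
  shows "m x 0 = 0" "m 0 y = 0" "m (s c x) y = s c (m x y)" "m x (s c y) = s c (m x y)"
    and "m (x + x') y = m x y + m x' y" "m x (y + y') = m x y + m x y'"
    and "w 0 = 0" "w (s c x) = c * w x" "w (x + y) = w x + w y"
    and "s c 0 = 0" "s 0 x = 0" "s a (s b x) = s (a * b) x" "s 1 x = x"
    and "s c (x + y) = s c x + s c y" "s (a + b) x = s a x + s b x"
proof -
  have vs: "vector_space s" and lw: "Vector_Spaces.linear s (*) w"
    and l1: "Vector_Spaces.linear s s (m x)" and l2: "Vector_Spaces.linear s s (\<lambda>x. m x y)"
    using assms unfolding baric_algebra_def by auto
  interpret vector_space s by (rule vs)
  interpret l1: Vector_Spaces.linear s s "m x" by (rule l1)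
  interpret l2: Vector_Spaces.linear s s "\<lambda>x. m x y" by (rule l2)
  interpret lw: Vector_Spaces.linear s "(*)" w by (rule lw)
  show "m x 0 = 0" "m 0 y = 0" "m (s c x) y = s c (m x y)" "m x (s c y) = s c (m x y)"
    "m (x + x') y = m x y + m x' y" "m x (y + y') = m x y + m x y'"
    using l1.zero l2.zero l1.scale l2.scale l1.add l2.add by auto
  show "w 0 = 0" "w (s c x) = c * w x" "w (x + y) = w x + w y"
    using lw.zero lw.scale lw.add by auto
  show "s c 0 = 0" "s 0 x = 0" "s a (s b x) = s (a * b) x" "s 1 x = x"
    "s c (x + y) = s c x + s c y" "s (a + b) x = s a x + s b x"
    by (auto simp: scale_right_distrib scale_left_distrib)
qed

lemma baric_algebra_unit:
  assumes "baric_algebra s m w"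
  obtains u where "w u = 1"
proof -
  obtain x where "w x \<noteq> 0" using baric_algebraD(3)[OF assms] by auto
  then have "w (s (1 / w x) x) = 1" using baric_algebra_identities(8)[OF assms] by simp
  then show ?thesis using that by blast
qed

definition weight_mult :: "('k \<Rightarrow> 'a \<Rightarrow> 'a) \<Rightarrow> ('a \<Rightarrow> 'a \<Rightarrow> 'a) \<Rightarrow> ('a \<Rightarrow> 'k) \<Rightarrow> bool" where
  "weight_mult s m w \<longleftrightarrow> (\<forall>x y. m x y = s (w y) x)"

lemma bowtie_mult_Pair:
  "bowtie_mult s1 m1 w1 s2 m2 w2 (a1, a2) (b1, b2) = (m1 a1 b1 + s1 (w2 b2) a1, m2 a2 b2 + s2 (w1 b1) a2)"
  by (simp add: bowtie_mult_def)

lemma bowtie_associative_iff: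
  assumes b1: "baric_algebra s1 m1 w1" and b2: "baric_algebra s2 m2 w2"
  shows "associative (bowtie_mult s1 m1 w1 s2 m2 w2) \<longleftrightarrow> weight_mult s1 m1 w1 \<and> weight_mult s2 m2 w2"
proof
  let ?M = "bowtie_mult s1 m1 w1 s2 m2 w2"
  note id1 = baric_algebra_identities[OF b1] and id2 = baric_algebra_identities[OF b2]
  assume assoc: "associative ?M"
  obtain u1 where u1: "w1 u1 = 1" using baric_algebra_unit[OF b1] .
  obtain u2 where u2: "w2 u2 = 1" using baric_algebra_unit[OF b2] .
  have "m1 x y = s1 (w1 y) x" for x y
  proof -
    have "?M (?M (x, 0) (0, u2)) (y, 0) = ?M (x, 0) (?M (0, u2) (y, 0))"
      using assoc unfolding associative_def by blast
    then show ?thesis using u2 by (simp add: bowtie_mult_Pair id1 id2)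
  qed
  moreover have "m2 x y = s2 (w2 y) x" for x y
  proof -
    have "?M (?M (0, x) (u1, 0)) (0, y) = ?M (0, x) (?M (u1, 0) (0, y))"
      using assoc unfolding associative_def by blast
    then show ?thesis using u1 by (simp add: bowtie_mult_Pair id1 id2 mult.commute)
  qed
  ultimately show "weight_mult s1 m1 w1 \<and> weight_mult s2 m2 w2"
    by (simp add: weight_mult_def)
next
  assume "weight_mult s1 m1 w1 \<and> weight_mult s2 m2 w2"
  then show "associative (bowtie_mult s1 m1 w1 s2 m2 w2)"
    using baric_algebra_identities[OF b1] baric_algebra_identities[OF b2]
    by (simp add: associative_def weight_mult_def bowtie_mult_def algebra_simps)
qed

lemma bowtie_weight_mult:
  assumes b1: "baric_algebra s1 m1 w1" and b2: "baric_algebra s2 m2 w2"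
    and "weight_mult s1 m1 w1" "weight_mult s2 m2 w2"
  shows "weight_mult (bowtie_scale s1 s2) (bowtie_mult s1 m1 w1 s2 m2 w2) (bowtie_weight w1 w2)"
  using assms baric_algebra_identities(15)[OF b1] baric_algebra_identities(15)[OF b2]
  by (simp add: weight_mult_def bowtie_mult_def bowtie_scale_def bowtie_weight_def add.commute)

lemma bowtie_baric_algebra:
  fixes s1 :: "'k::field \<Rightarrow> 'a::ab_group_add \<Rightarrow> 'a" and s2 :: "'k \<Rightarrow> 'b::ab_group_add \<Rightarrow> 'b"
  assumes b1: "baric_algebra s1 m1 w1" and b2: "baric_algebra s2 m2 w2"
  shows "baric_algebra (bowtie_scale s1 s2) (bowtie_mult s1 m1 w1 s2 m2 w2) (bowtie_weight w1 w2)"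
proof -
  let ?s = "bowtie_scale s1 s2" and ?M = "bowtie_mult s1 m1 w1 s2 m2 w2" and ?w = "bowtie_weight w1 w2"
  note D1 = baric_algebraD[OF b1] and D2 = baric_algebraD[OF b2]
  note id1 = baric_algebra_identities[OF b1] and id2 = baric_algebra_identities[OF b2]
  have vs: "vector_space ?s"
  proof -
    interpret vector_space_prod s1 s2
      by (simp add: vector_space_prod_def vector_space_pair_def D1(1) D2(1))
    have "?s = scale" by (simp add: fun_eq_iff bowtie_scale_def scale_def)
    then show ?thesis using p.vector_space_axioms by simp
  qed
  have vsK: "vector_space ((*) :: 'k \<Rightarrow> 'k \<Rightarrow> 'k)"
    using D1(2) unfolding Vector_Spaces.linear_iff by blast
  have "Vector_Spaces.linear ?s ?s (?M x)" for x
    unfolding Vector_Spaces.linear_iff using vs id1 id2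
    by (auto simp: bowtie_mult_def bowtie_scale_def algebra_simps)
  moreover have "Vector_Spaces.linear ?s ?s (\<lambda>x. ?M x y)" for y
    unfolding Vector_Spaces.linear_iff using vs id1 id2
    by (auto simp: bowtie_mult_def bowtie_scale_def algebra_simps)
  moreover have "Vector_Spaces.linear ?s (*) ?w"
    unfolding Vector_Spaces.linear_iff using vs vsK id1 id2
    by (auto simp: bowtie_weight_def bowtie_scale_def algebra_simps)
  moreover have "?w (?M x y) = ?w x * ?w y" for x y
    using D1(4) D2(4) id1 id2 by (simp add: bowtie_weight_def bowtie_mult_def algebra_simps)
  moreover have "?w \<noteq> (\<lambda>_. 0)"
  proof
    obtain u where "w1 u = 1" using baric_algebra_unit[OF b1] .
    then have "?w (u, 0) = 1" by (simp add: bowtie_weight_def id2(7))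
    moreover assume "?w = (\<lambda>_. 0)"
    ultimately show False by simp
  qed
  ultimately show ?thesis using vs unfolding baric_algebra_def by blast
qed

lemma (in vector_space_prod) basis_Times:
  assumes ind1: "\<not> vs1.dependent B1" and span1: "vs1.span B1 = UNIV"
    and ind2: "\<not> vs2.dependent B2" and span2: "vs2.span B2 = UNIV"
  shows "\<not> p.dependent (B1 \<times> {0} \<union> {0} \<times> B2)" and "p.span (B1 \<times> {0} \<union> {0} \<times> B2) = UNIV"
proof -
  show "\<not> p.dependent (B1 \<times> {0} \<union> {0} \<times> B2)"
    unfolding p.dependent_def
  proof safe
    fix a assume a: "a \<in> B1"
    assume "(a, 0) \<in> p.span (B1 \<times> {0} \<union> {0} \<times> B2 - {(a, 0)})"
    also have "B1 \<times> {0} \<union> {0} \<times> B2 - {(a, 0)} = (B1 - {a}) \<times> {0} \<union> {0} \<times> B2"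
      using a ind1 vs1.dependent_zero by auto
    finally show False
      using a ind1 by (auto simp: vs1.dependent_def p.span_Un span_Times_sing1 span_Times_sing2)
  next
    fix b assume b: "b \<in> B2"
    assume "(0, b) \<in> p.span (B1 \<times> {0} \<union> {0} \<times> B2 - {(0, b)})"
    also have "B1 \<times> {0} \<union> {0} \<times> B2 - {(0, b)} = B1 \<times> {0} \<union> {0} \<times> (B2 - {b})"
      using b ind2 vs2.dependent_zero by auto
    finally show False
      using b ind2 by (auto simp: vs2.dependent_def p.span_Un span_Times_sing1 span_Times_sing2)
  qed
  show "p.span (B1 \<times> {0} \<union> {0} \<times> B2) = UNIV"
    by (auto simp: p.span_Un span_Times_sing1 span_Times_sing2 span1 span2)
qed

lemma bowtie_has_dim:
  fixes s1 :: "'k::field \<Rightarrow> 'a::ab_group_add \<Rightarrow> 'a" and s2 :: "'k \<Rightarrow> 'b::ab_group_add \<Rightarrow> 'b"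
  assumes vs1: "vector_space s1" and vs2: "vector_space s2"
    and dim1: "has_dim s1 \<nu>1" and dim2: "has_dim s2 \<nu>2"
  shows "has_dim (bowtie_scale s1 s2) (\<nu>1 + \<nu>2)"
proof -
  interpret vector_space_prod s1 s2
    by (simp add: vector_space_prod_def vector_space_pair_def vs1 vs2)
  have scale_eq: "bowtie_scale s1 s2 = scale" by (simp add: fun_eq_iff bowtie_scale_def scale_def)
  from dim1 obtain B1 where ind1: "\<not> vs1.dependent B1" and span1: "vs1.span B1 = UNIV" and
    size1: "(finite B1 \<and> \<nu>1 = enat (card B1)) \<or> (infinite B1 \<and> countable B1 \<and> \<nu>1 = \<infinity>)"
    unfolding has_dim_def by blast
  from dim2 obtain B2 where ind2: "\<not> vs2.dependent B2" and span2: "vs2.span B2 = UNIV" and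
    size2: "(finite B2 \<and> \<nu>2 = enat (card B2)) \<or> (infinite B2 \<and> countable B2 \<and> \<nu>2 = \<infinity>)"
    unfolding has_dim_def by blast
  define B where "B = B1 \<times> {0} \<union> {0} \<times> B2"
  have disjoint: "B1 \<times> {0} \<inter> {0} \<times> B2 = {}"
    using ind1 vs1.dependent_zero by blast
  have "(finite B \<and> \<nu>1 + \<nu>2 = enat (card B)) \<or> (infinite B \<and> countable B \<and> \<nu>1 + \<nu>2 = \<infinity>)"
  proof (cases "finite B1 \<and> finite B2")
    case True
    then have "card B = card B1 + card B2"
      unfolding B_def by (simp add: card_Un_disjoint[OF _ _ disjoint] card_cartesian_product)
    then show ?thesis using True size1 size2 by (auto simp: B_def)
  next
    case False
    then have "infinite B" by (auto simp: B_def finite_cartesian_product_iff)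
    moreover have "countable B" using size1 size2 by (auto simp: B_def intro: countable_finite)
    moreover have "\<nu>1 + \<nu>2 = \<infinity>" using False size1 size2 by auto
    ultimately show ?thesis by blast
  qed
  then show ?thesis
    unfolding has_dim_def scale_eq B_def using basis_Times[OF ind1 span1 ind2 span2] by blast
qed

lemma Kb_carrier_finite: "g \<in> Kb_carrier \<nu> \<Longrightarrow> finite {i. g i \<noteq> 0}"
  by (simp add: Kb_carrier_def)

lemma Kb_weight_sum:
  assumes "finite S" "{i. g i \<noteq> 0} \<subseteq> S"
  shows "Kb_weight g = (\<Sum>i\<in>S. g i)"
  unfolding Kb_weight_def using assms by (intro sum.mono_neutral_left) auto

lemma finite_support_mult: "finite {i. g i \<noteq> 0} \<Longrightarrow> finite {i. a i * g i \<noteq> (0::'k::field)}"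
  by (rule finite_subset[of _ "{i. g i \<noteq> 0}"]) auto

lemma finite_support_update: "finite {i. g i \<noteq> 0} \<Longrightarrow> finite {i. (g(k := c)) i \<noteq> 0}"
  by (rule finite_subset[of _ "insert k {i. g i \<noteq> 0}"]) auto

lemma Kb_weight_split:
  assumes "finite {i. g i \<noteq> (0::'k::field)}"
  shows "Kb_weight g = g k + Kb_weight (g(k := 0))"
proof -
  let ?S = "insert k {i. g i \<noteq> 0}"
  have "Kb_weight g = (\<Sum>i\<in>?S. g i)" using assms by (intro Kb_weight_sum) auto
  also have "\<dots> = g k + (\<Sum>i\<in>?S - {k}. g i)" using assms by (simp add: sum.insert_remove)
  also have "(\<Sum>i\<in>?S - {k}. g i) = (\<Sum>i\<in>?S. (g(k := 0)) i)"
    using assms by (simp add: sum.insert_remove)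
  also have "\<dots> = Kb_weight (g(k := 0))" using assms by (intro Kb_weight_sum[symmetric]) auto
  finally show ?thesis .
qed

lemma Kb_weight_add:
  assumes "finite {i. g i \<noteq> 0}" "finite {i. h i \<noteq> (0::'k::field)}"
  shows "Kb_weight (\<lambda>i. g i + h i) = Kb_weight g + Kb_weight h"
proof -
  let ?S = "{i. g i \<noteq> 0} \<union> {i. h i \<noteq> 0}"
  have "Kb_weight (\<lambda>i. g i + h i) = (\<Sum>i\<in>?S. g i + h i)"
    using assms by (intro Kb_weight_sum) auto
  also have "\<dots> = (\<Sum>i\<in>?S. g i) + (\<Sum>i\<in>?S. h i)" by (rule sum.distrib)
  also have "\<dots> = Kb_weight g + Kb_weight h"
    using assms by (intro arg_cong2[where f = "(+)"] Kb_weight_sum[symmetric]) auto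
  finally show ?thesis .
qed

lemma Kb_weight_scale:
  assumes "finite {i. g i \<noteq> (0::'k::field)}"
  shows "Kb_weight (\<lambda>i. c * g i) = c * Kb_weight g"
proof -
  have "Kb_weight (\<lambda>i. c * g i) = (\<Sum>i | g i \<noteq> 0. c * g i)"
    using assms by (intro Kb_weight_sum) auto
  then show ?thesis by (simp add: Kb_weight_def sum_distrib_left)
qed

lemma Kb_carrier_update:
  assumes "g \<in> Kb_carrier \<nu>" "enat k < \<nu>"
  shows "g(k := c) \<in> Kb_carrier \<nu>"
  using assms finite_support_update[OF Kb_carrier_finite[OF assms(1)], of k c]
  unfolding Kb_carrier_def by (auto dest: leD)

text \<open>The pivot map: for weights a and a pivot index k, replace the k-th coordinate of g
  so that the sum of all coordinates becomes the a-weighted sum of g.  For a k \<noteq> 0 it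
  is a linear automorphism of K^{\<bowtie>\<nu>} transforming the linear form
  g \<mapsto> \<Sum>i. a i * g i into the weight g \<mapsto> \<Sum>i. g i.\<close>

definition pivot_map :: "(nat \<Rightarrow> 'k::field) \<Rightarrow> nat \<Rightarrow> (nat \<Rightarrow> 'k) \<Rightarrow> nat \<Rightarrow> 'k" where
  "pivot_map a k g = g(k := Kb_weight (\<lambda>i. a i * g i) - Kb_weight (g(k := 0)))"

lemma pivot_map_weight:
  assumes "finite {i. g i \<noteq> 0}"
  shows "Kb_weight (pivot_map a k g) = Kb_weight (\<lambda>i. a i * g i)"
proof -
  have "finite {i. pivot_map a k g i \<noteq> 0}"
    unfolding pivot_map_def by (rule finite_support_update[OF assms])
  then have "Kb_weight (pivot_map a k g) = pivot_map a k g k + Kb_weight ((pivot_map a k g)(k := 0))"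
    by (rule Kb_weight_split)
  also have "(pivot_map a k g)(k := 0) = g(k := 0)" by (simp add: pivot_map_def)
  also have "pivot_map a k g k = Kb_weight (\<lambda>i. a i * g i) - Kb_weight (g(k := 0))"
    by (simp add: pivot_map_def)
  finally show ?thesis by (simp only: diff_add_cancel)
qed

lemma pivot_map_add:
  assumes g: "finite {i. g i \<noteq> 0}" and h: "finite {i. h i \<noteq> 0}"
  shows "pivot_map a k (\<lambda>i. g i + h i) = (\<lambda>i. pivot_map a k g i + pivot_map a k h i)"
proof -
  have weighted: "Kb_weight (\<lambda>i. a i * (g i + h i)) = Kb_weight (\<lambda>i. a i * g i) + Kb_weight (\<lambda>i. a i * h i)"
    using Kb_weight_add[OF finite_support_mult[OF g] finite_support_mult[OF h]]
    by (simp add: distrib_left)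
  have "(\<lambda>i. g i + h i)(k := 0) = (\<lambda>i. (g(k := 0)) i + (h(k := 0)) i)" by auto
  then have off_k: "Kb_weight ((\<lambda>i. g i + h i)(k := 0)) = Kb_weight (g(k := 0)) + Kb_weight (h(k := 0))"
    by (simp only: Kb_weight_add[OF finite_support_update[OF g] finite_support_update[OF h]])
  show ?thesis unfolding fun_eq_iff pivot_map_def by (simp add: weighted off_k)
qed

lemma pivot_map_scale:
  assumes g: "finite {i. g i \<noteq> 0}"
  shows "pivot_map a k (\<lambda>i. c * g i) = (\<lambda>i. c * pivot_map a k g i)"
proof -
  have weighted: "Kb_weight (\<lambda>i. a i * (c * g i)) = c * Kb_weight (\<lambda>i. a i * g i)"
    using Kb_weight_scale[OF finite_support_mult[OF g]] by (simp add: mult.left_commute)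
  have "(\<lambda>i. c * g i)(k := 0) = (\<lambda>i. c * (g(k := 0)) i)" by auto
  then have off_k: "Kb_weight ((\<lambda>i. c * g i)(k := 0)) = c * Kb_weight (g(k := 0))"
    by (simp only: Kb_weight_scale[OF finite_support_update[OF g]])
  show ?thesis unfolding fun_eq_iff pivot_map_def by (simp add: weighted off_k right_diff_distrib)
qed

text \<open>For a k \<noteq> 0 the pivot map is injective and surjective on finitely supported
  families; a preimage of h differs from h only in the k-th coordinate.\<close>

lemma pivot_map_inj:
  assumes ak: "a k \<noteq> 0" and g: "finite {i. g i \<noteq> 0}" and h: "finite {i. h i \<noteq> 0}"
    and eq: "pivot_map a k g = pivot_map a k h"
  shows "g = h"
proof -
  have off_k: "g(k := 0) = h(k := 0)"
  proof
    fix i show "(g(k := 0)) i = (h(k := 0)) i"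
      using fun_cong[OF eq, of i] by (cases "i = k") (simp_all add: pivot_map_def)
  qed
  have weighted_off_k: "(\<lambda>i. a i * g i)(k := 0) = (\<lambda>i. a i * h i)(k := 0)"
  proof
    fix i show "((\<lambda>i. a i * g i)(k := 0)) i = ((\<lambda>i. a i * h i)(k := 0)) i"
      using fun_cong[OF off_k, of i] by (cases "i = k") auto
  qed
  have "Kb_weight (\<lambda>i. a i * g i) = Kb_weight (\<lambda>i. a i * h i)"
    using fun_cong[OF eq, of k] off_k by (simp add: pivot_map_def)
  then have "a k * g k = a k * h k"
    using Kb_weight_split[OF finite_support_mult[OF g], of a k]
      Kb_weight_split[OF finite_support_mult[OF h], of a k] weighted_off_k by simp
  then have "g k = h k" using ak by simp
  show "g = h"
  proof
    fix i show "g i = h i"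
      using fun_cong[OF off_k, of i] \<open>g k = h k\<close> by (cases "i = k") auto
  qed
qed

lemma pivot_map_surj:
  assumes ak: "a k \<noteq> 0" and h: "finite {i. h i \<noteq> 0}"
  defines "t \<equiv> (h k + Kb_weight (h(k := 0)) - Kb_weight ((\<lambda>i. a i * h i)(k := 0))) / a k"
  shows "pivot_map a k (h(k := t)) = h"
proof -
  have "(\<lambda>i. a i * (h(k := t)) i)(k := 0) = (\<lambda>i. a i * h i)(k := 0)" by auto
  then have "Kb_weight (\<lambda>i. a i * (h(k := t)) i) = a k * t + Kb_weight ((\<lambda>i. a i * h i)(k := 0))"
    using Kb_weight_split[OF finite_support_mult[OF finite_support_update[OF h]], of a k t k] by simp
  then show ?thesis
    using ak by (simp add: fun_eq_iff pivot_map_def t_def)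
qed

lemma pivot_map_bij:
  fixes a :: "nat \<Rightarrow> 'k::field"
  assumes ak: "a k \<noteq> 0" and k: "enat k < \<nu>"
  shows "bij_betw (pivot_map a k) (Kb_carrier \<nu>) (Kb_carrier \<nu>)"
  unfolding bij_betw_def
proof (intro conjI inj_onI subset_antisym subsetI)
  fix g h assume "g \<in> Kb_carrier \<nu>" "h \<in> Kb_carrier \<nu>" "pivot_map a k g = pivot_map a k h"
  then show "g = h" using pivot_map_inj[of a k, OF ak] Kb_carrier_finite by blast
next
  fix g assume "g \<in> pivot_map a k ` Kb_carrier \<nu>"
  then show "g \<in> Kb_carrier \<nu>" unfolding pivot_map_def using Kb_carrier_update[OF _ k] by blast
next
  fix h :: "nat \<Rightarrow> 'k" assume h: "h \<in> Kb_carrier \<nu>"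
  obtain t where "h = pivot_map a k (h(k := t))"
    using pivot_map_surj[of a k, OF ak Kb_carrier_finite[OF h]] by metis
  then show "h \<in> pivot_map a k ` Kb_carrier \<nu>"
    using Kb_carrier_update[OF h k] by blast
qed

lemma has_dim_enumerated_basis:
  assumes "has_dim s \<nu>"
  obtains B and e
  where "\<not> module.dependent s B" "module.span s B = UNIV" "bij_betw e {i. enat i < \<nu>} B"
proof -
  from assms obtain B where ind: "\<not> module.dependent s B" and span: "module.span s B = UNIV"
    and size: "(finite B \<and> \<nu> = enat (card B)) \<or> (infinite B \<and> countable B \<and> \<nu> = \<infinity>)"
    unfolding has_dim_def by blast
  have "\<exists>e. bij_betw e {i. enat i < \<nu>} B"
  proof (cases "finite B")
    case True
    then have "{i. enat i < \<nu>} = {0..<card B}" using size by auto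
    then show ?thesis using ex_bij_betw_nat_finite[OF True] by auto
  next
    case False
    then have "{i. enat i < \<nu>} = UNIV" and "countable B" using size by auto
    then show ?thesis using bij_betw_from_nat_into[OF \<open>countable B\<close> False] by auto
  qed
  then show ?thesis using that ind span by blast
qed

definition basis_coords ::
  "('k::field \<Rightarrow> 'v::ab_group_add \<Rightarrow> 'v) \<Rightarrow> 'v set \<Rightarrow> (nat \<Rightarrow> 'v) \<Rightarrow> enat \<Rightarrow> 'v \<Rightarrow> nat \<Rightarrow> 'k" where
  "basis_coords s B e \<nu> x i = (if enat i < \<nu> then module.representation s B x (e i) else 0)"

context vector_space
begin

lemma basis_coords_carrier:
  assumes "bij_betw e {i. enat i < \<nu>} B"
  shows "basis_coords scale B e \<nu> x \<in> Kb_carrier \<nu>"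
proof -
  have "{i. basis_coords scale B e \<nu> x i \<noteq> 0} \<subseteq> e -` {b. representation B x b \<noteq> 0} \<inter> {i. enat i < \<nu>}"
    by (auto simp: basis_coords_def split: if_splits)
  moreover have "finite (e -` {b. representation B x b \<noteq> 0} \<inter> {i. enat i < \<nu>})"
    using assms by (intro finite_vimage_IntI finite_representation) (simp add: bij_betw_def)
  ultimately have "finite {i. basis_coords scale B e \<nu> x i \<noteq> 0}" by (rule finite_subset)
  then show ?thesis by (auto simp: Kb_carrier_def basis_coords_def)
qed

lemma basis_coords_add:
  assumes "independent B" "span B = UNIV"
  shows "basis_coords scale B e \<nu> (x + y) = (\<lambda>i. basis_coords scale B e \<nu> x i + basis_coords scale B e \<nu> y i)"
  using assms by (auto simp: basis_coords_def representation_add)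

lemma basis_coords_scale:
  assumes "independent B" "span B = UNIV"
  shows "basis_coords scale B e \<nu> (c *s x) = (\<lambda>i. c * basis_coords scale B e \<nu> x i)"
  using assms by (auto simp: basis_coords_def representation_scale)

lemma basis_coords_inj:
  assumes "independent B" "span B = UNIV" "bij_betw e {i. enat i < \<nu>} B"
    and eq: "basis_coords scale B e \<nu> x = basis_coords scale B e \<nu> y"
  shows "x = y"
proof -
  have "representation B x b = representation B y b" for b
  proof (cases "b \<in> B")
    case True
    then obtain i where "enat i < \<nu>" "b = e i" using assms(3) by (auto simp: bij_betw_def)
    then show ?thesis using fun_cong[OF eq, of i] by (simp add: basis_coords_def)
  next
    case False
    then show ?thesis using representation_ne_zero by metis
  qed
  then have "representation B x = representation B y" by auto
  then show ?thesis using sum_nonzero_representation_eq[OF assms(1)] assms(2) by (metis UNIV_I)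
qed

lemma basis_coords_combination:
  assumes ind: "independent B" and span: "span B = UNIV"
    and e: "bij_betw e {i. enat i < \<nu>} B" and g: "g \<in> Kb_carrier \<nu>"
  shows "basis_coords scale B e \<nu> (\<Sum>i | g i \<noteq> 0. g i *s e i) = g"
proof
  fix j
  let ?S = "{i. g i \<noteq> 0}"
  have S_below: "enat i < \<nu>" if "i \<in> ?S" for i
    using g that by (auto simp: Kb_carrier_def not_le[symmetric])
  have "representation B (\<Sum>i\<in>?S. g i *s e i) b = (\<Sum>i\<in>?S. g i * (if b = e i then 1 else 0))" for b
    using e S_below
    by (subst representation_sum[OF ind])
       (auto simp: span representation_scale[OF ind] representation_basis[OF ind] bij_betwE)
  moreover have "(\<Sum>i\<in>?S. g i * (if e j = e i then 1 else 0)) = g j" if "enat j < \<nu>"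
  proof -
    have "(\<Sum>i\<in>?S. g i * (if e j = e i then 1 else 0)) = (\<Sum>i\<in>?S. if j = i then g i else 0)"
      using e S_below that by (intro sum.cong refl) (auto simp: bij_betw_def inj_on_def)
    also have "\<dots> = g j" using g by (auto simp: Kb_carrier_def)
    finally show ?thesis .
  qed
  moreover have "g j = 0" if "\<not> enat j < \<nu>" using g that by (auto simp: Kb_carrier_def not_less)
  ultimately show "basis_coords scale B e \<nu> (\<Sum>i\<in>?S. g i *s e i) j = g j"
    by (auto simp: basis_coords_def)
qed

lemma basis_coords_bij:
  assumes "independent B" "span B = UNIV" "bij_betw e {i. enat i < \<nu>} B"
  shows "bij_betw (basis_coords scale B e \<nu>) UNIV (Kb_carrier \<nu>)"
  unfolding bij_betw_def
proof
  show "inj (basis_coords scale B e \<nu>)" using basis_coords_inj[OF assms] by (auto intro: injI)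
  have "g \<in> range (basis_coords scale B e \<nu>)" if "g \<in> Kb_carrier \<nu>" for g
    using basis_coords_combination[OF assms that] by (metis rangeI)
  then show "range (basis_coords scale B e \<nu>) = Kb_carrier \<nu>"
    using basis_coords_carrier[OF assms(3)] by blast
qed

lemma basis_coords_expansion:
  assumes "independent B" "span B = UNIV" "bij_betw e {i. enat i < \<nu>} B"
  shows "x = (\<Sum>i | basis_coords scale B e \<nu> x i \<noteq> 0. basis_coords scale B e \<nu> x i *s e i)"
  by (rule basis_coords_inj[OF assms])
    (rule basis_coords_combination[OF assms basis_coords_carrier[OF assms(3)], symmetric])

lemma linear_form_coords:
  assumes lin: "Vector_Spaces.linear scale (*) w"
    and ind: "independent B" and span: "span B = UNIV" and e: "bij_betw e {i. enat i < \<nu>} B"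
  shows "w x = Kb_weight (\<lambda>i. w (e i) * basis_coords scale B e \<nu> x i)"
proof -
  interpret lw: Vector_Spaces.linear scale "(*)" w by (rule lin)
  let ?c = "basis_coords scale B e \<nu>"
  have "w x = w (\<Sum>i | ?c x i \<noteq> 0. ?c x i *s e i)"
    using basis_coords_expansion[OF ind span e] by metis
  also have "\<dots> = (\<Sum>i | ?c x i \<noteq> 0. w (e i) * ?c x i)"
    by (simp add: lw.sum lw.scale mult.commute)
  also have "\<dots> = Kb_weight (\<lambda>i. w (e i) * ?c x i)"
    using Kb_carrier_finite[OF basis_coords_carrier[OF e]] by (intro Kb_weight_sum[symmetric]) auto
  finally show ?thesis .
qed

end

lemma iso_Kb_weight_mult:
  assumes "iso_Kb s m w \<nu>"
  shows "weight_mult s m w"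
  unfolding weight_mult_def
proof (intro allI)
  fix x y
  obtain f :: "_ \<Rightarrow> nat \<Rightarrow> _" where bij: "bij_betw f UNIV (Kb_carrier \<nu>)"
    and scale: "\<forall>c x. f (s c x) = (\<lambda>i. c * f x i)"
    and mult: "\<forall>x y. f (m x y) = Kb_mult (f x) (f y)"
    and weight: "\<forall>x. Kb_weight (f x) = w x"
    using assms unfolding iso_Kb_def by blast
  have "f (m x y) = f (s (w y) x)" using scale mult weight by (simp add: Kb_mult_def)
  then show "m x y = s (w y) x" using bij by (simp add: bij_betw_def inj_eq)
qed

text \<open>Conversely, a weight-multiplicative baric algebra of dimension \<nu> is isomorphic to
  K^{\<bowtie>\<nu>}: compose the coordinate map with a pivot map at a basis vector of nonzero weight.\<close>

lemma weight_mult_iso_Kb: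
  fixes s :: "'k::field \<Rightarrow> 'a::ab_group_add \<Rightarrow> 'a"
  assumes baric: "baric_algebra s m w" and wm: "weight_mult s m w" and dim: "has_dim s \<nu>"
  shows "iso_Kb s m w \<nu>"
proof -
  interpret vector_space s by (rule baric_algebraD(1)[OF baric])
  obtain B e where ind: "independent B" and span: "span B = UNIV"
    and e: "bij_betw e {i. enat i < \<nu>} B"
    using has_dim_enumerated_basis[OF dim] by blast
  let ?c = "basis_coords s B e \<nu>"
  define a where "a i = w (e i)" for i
  have fin: "finite {i. ?c x i \<noteq> 0}" for x
    by (rule Kb_carrier_finite[OF basis_coords_carrier[OF e]])
  have weight_coords: "w x = Kb_weight (\<lambda>i. a i * ?c x i)" for x
    unfolding a_def by (rule linear_form_coords[OF baric_algebraD(2)[OF baric] ind span e])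
  have "\<exists>k. enat k < \<nu> \<and> a k \<noteq> 0"
  proof (rule ccontr)
    assume "\<not> ?thesis"
    then have "a i * ?c x i = 0" for x i by (cases "enat i < \<nu>") (auto simp: basis_coords_def)
    then have "w x = 0" for x using weight_coords by (simp add: Kb_weight_def)
    then show False using baric_algebraD(3)[OF baric] by auto
  qed
  then obtain k where k: "enat k < \<nu>" and ak: "a k \<noteq> 0" by blast
  define f where "f = (\<lambda>x. pivot_map a k (?c x))"
  have f_scale: "f (s c x) = (\<lambda>i. c * f x i)" for c x
    using basis_coords_scale[OF ind span] pivot_map_scale[OF fin] by (simp add: f_def)
  have f_weight: "Kb_weight (f x) = w x" for x
    by (simp add: f_def pivot_map_weight[OF fin] weight_coords)
  show ?thesis unfolding iso_Kb_def
  proof (intro exI[of _ f] conjI allI)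
    show "bij_betw f UNIV (Kb_carrier \<nu>)"
      using bij_betw_trans[OF basis_coords_bij[OF ind span e] pivot_map_bij[of a k, OF ak k]]
      by (simp add: f_def comp_def)
    show "f (x + y) = (\<lambda>i. f x i + f y i)" for x y
      using basis_coords_add[OF ind span] pivot_map_add[OF fin fin] by (simp add: f_def)
    show "f (s c x) = (\<lambda>i. c * f x i)" for c x by (rule f_scale)
    show "f (m x y) = Kb_mult (f x) (f y)" for x y
      using wm by (simp add: weight_mult_def f_scale f_weight Kb_mult_def)
    show "Kb_weight (f x) = w x" for x by (rule f_weight)
  qed
qed

lemma iso_Kb_iff_weight_mult:
  assumes "baric_algebra s m w" "has_dim s \<nu>"
  shows "iso_Kb s m w \<nu> \<longleftrightarrow> weight_mult s m w"
  using assms iso_Kb_weight_mult weight_mult_iso_Kb by blast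

theorem corollary6p1:
  fixes s1 :: "'k::field_char_0 \<Rightarrow> 'a::ab_group_add \<Rightarrow> 'a"
    and m1 :: "'a \<Rightarrow> 'a \<Rightarrow> 'a" and w1 :: "'a \<Rightarrow> 'k"
    and s2 :: "'k \<Rightarrow> 'b::ab_group_add \<Rightarrow> 'b"
    and m2 :: "'b \<Rightarrow> 'b \<Rightarrow> 'b" and w2 :: "'b \<Rightarrow> 'k"
    and \<nu>1 \<nu>2 :: enat
  assumes "baric_algebra s1 m1 w1" and "baric_algebra s2 m2 w2"
    and "countable_dim s1" and "countable_dim s2"
    and "has_dim s1 \<nu>1" and "has_dim s2 \<nu>2"
  shows "(associative (bowtie_mult s1 m1 w1 s2 m2 w2) \<longleftrightarrow>
            iso_Kb s1 m1 w1 \<nu>1 \<and> iso_Kb s2 m2 w2 \<nu>2)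
       \<and> (associative (bowtie_mult s1 m1 w1 s2 m2 w2) \<longrightarrow>
            iso_Kb (bowtie_scale s1 s2) (bowtie_mult s1 m1 w1 s2 m2 w2)
                   (bowtie_weight w1 w2) (\<nu>1 + \<nu>2))"
proof -
  have assoc: "associative (bowtie_mult s1 m1 w1 s2 m2 w2) \<longleftrightarrow>
      weight_mult s1 m1 w1 \<and> weight_mult s2 m2 w2"
    by (rule bowtie_associative_iff[OF assms(1,2)])
  have iso1: "iso_Kb s1 m1 w1 \<nu>1 \<longleftrightarrow> weight_mult s1 m1 w1"
    by (rule iso_Kb_iff_weight_mult[OF assms(1,5)])
  have iso2: "iso_Kb s2 m2 w2 \<nu>2 \<longleftrightarrow> weight_mult s2 m2 w2"
    by (rule iso_Kb_iff_weight_mult[OF assms(2,6)])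
  have dim: "has_dim (bowtie_scale s1 s2) (\<nu>1 + \<nu>2)"
    using baric_algebraD(1)[OF assms(1)] baric_algebraD(1)[OF assms(2)] assms(5,6)
    by (rule bowtie_has_dim)
  have iso: "iso_Kb (bowtie_scale s1 s2) (bowtie_mult s1 m1 w1 s2 m2 w2)
      (bowtie_weight w1 w2) (\<nu>1 + \<nu>2)" if "weight_mult s1 m1 w1" "weight_mult s2 m2 w2"
    using iso_Kb_iff_weight_mult[OF bowtie_baric_algebra[OF assms(1,2)] dim]
      bowtie_weight_mult[OF assms(1,2) that] by blast
  show ?thesis using assoc iso1 iso2 iso by blast
qed

end
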